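(* Let $\bullet\in\{0,L_p,L,1_p,1\}$, $\mathbf{x}_0\in\mathbb{R}^d$, $\mathbf{A}\in C^\bullet_{\mathbf{x}_0}(\mathbb{R}^d,\mathbb{R}^{m\times n})$, $\mu\in(0,\infty)$ and $\nu\in\mathbb{N}\cup\{0\}$. Define $\lambda:\mathbb{R}^d\to(0,\infty]$ by $\lambda^2(\mathbf{x})=\mu^2/|(\mathbf{A}\mathbf{A}^T)(\mathbf{x})|^\nu$ if $|(\mathbf{A}\mathbf{A}^T)(\mathbf{x})|^\nu>0$ and $\lambda^2(\mathbf{x})=\infty$ otherwise. Then the map $\mathbf{x}\mapsto\mathbf{A}(\mathbf{x})^{*(\lambda(\mathbf{x}))}$ belongs to $C^\bullet_{\mathbf{x}_0}(\mathbb{R}^d,\mathbb{R}^{n\times m})$.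
   Context: $|\cdot|$ denotes the determinant, with $0^0=1$. Damped pseudoinverse: $\mathbf{A}^{*(\lambda)}=\mathbf{A}^T(\mathbf{A}\mathbf{A}^T+\lambda^2\mathbf{I}_m)^+$ for $\lambda<\infty$ and $\mathbf{A}^{*(\infty)}=\mathbf{0}$. Regularity classes: $f\in C^\bullet_{x_0}$ means, respectively, ($0$) continuous at $x_0$; ($L_p$) there are $r>0,L\ge0$ with $\|f(x)-f(x_0)\|\le L\|x-x_0\|$ for $\|x-x_0\|\le r$; ($L$) Lipschitz on a neighborhood of $x_0$; ($1_p$) Fréchet differentiable at $x_0$; ($1$) differentiable on a neighborhood of $x_0$ with derivative continuous at $x_0$. *)

theory Defs
  imports "HOL-Analysis.Analysis"
begin

definition pinv :: "real^'n^'m \<Rightarrow> real^'m^'n" where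
  "pinv A = (THE X. A ** X ** A = A \<and> X ** A ** X = X \<and>
                    transpose (A ** X) = A ** X \<and> transpose (X ** A) = X ** A)"

definition damped_pinv :: "real^'n^'m \<Rightarrow> ereal \<Rightarrow> real^'m^'n" where
  "damped_pinv A lam = (if lam = \<infinity> then 0
     else transpose A ** pinv (A ** transpose A + ((real_of_ereal lam)\<^sup>2) *\<^sub>R mat 1))"

datatype regclass = Reg0 | RegLp | RegL | Reg1p | Reg1

fun regular_at :: "regclass \<Rightarrow> ('a::real_normed_vector \<Rightarrow> 'b::real_normed_vector) \<Rightarrow> 'a \<Rightarrow> bool" where
  "regular_at Reg0 f x0 = continuous (at x0) f"
| "regular_at RegLp f x0 = (\<exists>r>0. \<exists>L\<ge>0. \<forall>x. norm (x - x0) \<le> r \<longrightarrow>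
        norm (f x - f x0) \<le> L * norm (x - x0))"
| "regular_at RegL f x0 = (\<exists>U. open U \<and> x0 \<in> U \<and> (\<exists>L. L-lipschitz_on U f))"
| "regular_at Reg1p f x0 = (f differentiable (at x0))"
| "regular_at Reg1 f x0 = (\<exists>U f'. open U \<and> x0 \<in> U \<and>
        (\<forall>x\<in>U. (f has_derivative blinfun_apply (f' x)) (at x)) \<and> continuous (at x0) f')"

definition damping :: "real \<Rightarrow> nat \<Rightarrow> real^'n^'m \<Rightarrow> ereal" where
  "damping \<mu> \<nu> M = (if det (M ** transpose M) ^ \<nu> > 0
      then ereal (sqrt (\<mu>\<^sup>2 / det (M ** transpose M) ^ \<nu>)) else \<infinity>)"

end

theory Submission
  imports Defs
begin

text \<open>
  Since \<open>det (M M\<^sup>T) \<ge> 0\<close>, writing \<open>c = det (M M\<^sup>T)\<^sup>\<nu>\<close> both branches of the damping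
  agree with the single formula \<open>c M\<^sup>T (c M M\<^sup>T + \<mu>\<^sup>2 I)\<^sup>-\<^sup>1\<close>: for \<open>c > 0\<close> multiply the
  damped Gram matrix by \<open>c\<close>, and for \<open>c = 0\<close> both sides vanish. The matrix being
  inverted is positive definite, so by Cramer's rule the formula is a rational function
  of the entries of \<open>M\<close> with nowhere vanishing denominator, hence a \<open>C\<^sup>1\<close> map on all of
  \<open>\<real>\<^sup>m\<^sup>\<times>\<^sup>n\<close>. Every regularity class is preserved by composition with such a map.
\<close>

definition continuously_differentiable :: "('a::euclidean_space \<Rightarrow> 'b::real_normed_vector) \<Rightarrow> bool" where
  "continuously_differentiable f \<longleftrightarrow>
     (\<exists>f'. (\<forall>x. (f has_derivative blinfun_apply (f' x)) (at x)) \<and> continuous_on UNIV f')"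

lemma continuously_differentiableE:
  assumes "continuously_differentiable f"
  obtains f' where "\<And>x. (f has_derivative blinfun_apply (f' x)) (at x)" "\<And>x. isCont f' x"
  using assms unfolding continuously_differentiable_def
  by (metis continuous_on_eq_continuous_at open_UNIV UNIV_I)

lemma continuously_differentiable_imp_isCont:
  "continuously_differentiable f \<Longrightarrow> isCont f x"
  by (metis continuously_differentiableE has_derivative_continuous)

lemma continuously_differentiable_const: "continuously_differentiable (\<lambda>x. c)"
  unfolding continuously_differentiable_def
  by (rule exI[of _ "\<lambda>x. 0"]) (auto intro!: derivative_eq_intros)

lemma continuously_differentiable_bounded_linear:
  "bounded_linear L \<Longrightarrow> continuously_differentiable L"
  unfolding continuously_differentiable_def
  by (rule exI[of _ "\<lambda>x. Blinfun L"])
    (auto simp: bounded_linear_Blinfun_apply intro!: bounded_linear_imp_has_derivative)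

lemma continuously_differentiable_compose_bounded_linear:
  assumes L: "bounded_linear L" and f: "continuously_differentiable f"
  shows "continuously_differentiable (\<lambda>x. L (f x))"
proof -
  obtain F where F: "\<And>x. (f has_derivative blinfun_apply (F x)) (at x)" "continuous_on UNIV F"
    using f unfolding continuously_differentiable_def by blast
  define D where "D x = Blinfun L o\<^sub>L F x" for x
  have "((\<lambda>x. L (f x)) has_derivative blinfun_apply (D x)) (at x)" for x
    using bounded_linear.has_derivative[OF L F(1)[of x]]
    by (simp add: D_def blinfun_compose.rep_eq bounded_linear_Blinfun_apply[OF L] o_def)
  moreover have "continuous_on UNIV D"
    unfolding D_def by (rule bounded_bilinear.continuous_on[OF bounded_bilinear_blinfun_compose])
       (auto intro: F(2))
  ultimately show ?thesis
    unfolding continuously_differentiable_def by blast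
qed

lemma continuously_differentiable_add:
  assumes "continuously_differentiable f" "continuously_differentiable g"
  shows "continuously_differentiable (\<lambda>x. f x + g x)"
proof -
  obtain F where F: "\<And>x. (f has_derivative blinfun_apply (F x)) (at x)" "continuous_on UNIV F"
    using assms(1) unfolding continuously_differentiable_def by blast
  obtain G where G: "\<And>x. (g has_derivative blinfun_apply (G x)) (at x)" "continuous_on UNIV G"
    using assms(2) unfolding continuously_differentiable_def by blast
  show ?thesis
    unfolding continuously_differentiable_def
    using F G by (intro exI[of _ "\<lambda>x. F x + G x"])
      (auto intro!: continuous_on_add has_derivative_add simp: plus_blinfun.rep_eq)
qed

lemma continuously_differentiable_scaleR:
  fixes f :: "'a::euclidean_space \<Rightarrow> real"
  assumes f: "continuously_differentiable f" and g: "continuously_differentiable g"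
  shows "continuously_differentiable (\<lambda>x. f x *\<^sub>R g x)"
proof -
  obtain F where F: "\<And>x. (f has_derivative blinfun_apply (F x)) (at x)" "continuous_on UNIV F"
    using f unfolding continuously_differentiable_def by blast
  obtain G where G: "\<And>x. (g has_derivative blinfun_apply (G x)) (at x)" "continuous_on UNIV G"
    using g unfolding continuously_differentiable_def by blast
  have cont: "continuous_on UNIV f" "continuous_on UNIV g"
    using f g by (auto intro: continuous_at_imp_continuous_on continuously_differentiable_imp_isCont)
  define D where "D x = f x *\<^sub>R G x + (blinfun_scaleR_left (g x) o\<^sub>L F x)" for x
  have "((\<lambda>x. f x *\<^sub>R g x) has_derivative blinfun_apply (D x)) (at x)" for x
    using has_derivative_scaleR[OF F(1)[of x] G(1)[of x]]
    by (simp add: D_def plus_blinfun.rep_eq scaleR_blinfun.rep_eq)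
  moreover have "continuous_on UNIV D"
    unfolding D_def
    by (intro continuous_on_add continuous_on_scaleR cont G(2) F(2)
          bounded_bilinear.continuous_on[OF bounded_bilinear_blinfun_compose]
          bounded_linear.continuous_on[OF bounded_linear_blinfun_scaleR_left])
  ultimately show ?thesis
    unfolding continuously_differentiable_def by blast
qed

lemma continuously_differentiable_mult:
  fixes f g :: "'a::euclidean_space \<Rightarrow> real"
  assumes "continuously_differentiable f" "continuously_differentiable g"
  shows "continuously_differentiable (\<lambda>x. f x * g x)"
  using continuously_differentiable_scaleR[OF assms] by simp

lemma continuously_differentiable_inverse:
  fixes f :: "'a::euclidean_space \<Rightarrow> real"
  assumes f: "continuously_differentiable f" and nz: "\<And>x. f x \<noteq> 0"
  shows "continuously_differentiable (\<lambda>x. inverse (f x))"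
proof -
  obtain F where F: "\<And>x. (f has_derivative blinfun_apply (F x)) (at x)" "continuous_on UNIV F"
    using f unfolding continuously_differentiable_def by blast
  have cont: "continuous_on UNIV f"
    using f by (auto intro: continuous_at_imp_continuous_on continuously_differentiable_imp_isCont)
  define D where "D x = (- (inverse (f x))\<^sup>2) *\<^sub>R F x" for x
  have "((\<lambda>x. inverse (f x)) has_derivative blinfun_apply (D x)) (at x)" for x
  proof -
    have "blinfun_apply (D x) = (\<lambda>h. - (inverse (f x) * F x h * inverse (f x)))"
      by (rule ext) (simp add: D_def power2_eq_square scaleR_blinfun.rep_eq uminus_blinfun.rep_eq)
    then show ?thesis
      using Deriv.has_derivative_inverse[OF nz F(1)] by simp
  qed
  moreover have "continuous_on UNIV D"
    unfolding D_def using nz by (intro continuous_intros cont F(2)) auto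
  ultimately show ?thesis
    unfolding continuously_differentiable_def by blast
qed

lemma continuously_differentiable_divide:
  fixes f g :: "'a::euclidean_space \<Rightarrow> real"
  assumes "continuously_differentiable f" "continuously_differentiable g" "\<And>x. g x \<noteq> 0"
  shows "continuously_differentiable (\<lambda>x. f x / g x)"
  using continuously_differentiable_mult[OF assms(1) continuously_differentiable_inverse[OF assms(2,3)]]
  by (simp add: divide_inverse)

lemma continuously_differentiable_sum:
  assumes "finite S" "\<And>i. i \<in> S \<Longrightarrow> continuously_differentiable (f i)"
  shows "continuously_differentiable (\<lambda>x. \<Sum>i\<in>S. f i x)"
  using assms
  by (induction S rule: finite_induct)
    (auto intro: continuously_differentiable_const continuously_differentiable_add)

lemma continuously_differentiable_prod:
  fixes f :: "'i \<Rightarrow> 'a::euclidean_space \<Rightarrow> real"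
  assumes "finite S" "\<And>i. i \<in> S \<Longrightarrow> continuously_differentiable (f i)"
  shows "continuously_differentiable (\<lambda>x. \<Prod>i\<in>S. f i x)"
  using assms
  by (induction S rule: finite_induct)
    (auto intro: continuously_differentiable_const continuously_differentiable_mult)

lemma continuously_differentiable_power:
  fixes f :: "'a::euclidean_space \<Rightarrow> real"
  assumes "continuously_differentiable f"
  shows "continuously_differentiable (\<lambda>x. f x ^ n)"
  by (induction n)
    (auto intro: continuously_differentiable_const continuously_differentiable_mult assms)

lemma continuously_differentiable_component:
  fixes f :: "'a::euclidean_space \<Rightarrow> 'b::real_normed_vector ^'n"
  assumes "continuously_differentiable f"
  shows "continuously_differentiable (\<lambda>x. f x $ i)"
  by (rule continuously_differentiable_compose_bounded_linear[OF bounded_linear_vec_nth assms])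

lemma continuously_differentiable_vec:
  fixes f :: "'a::euclidean_space \<Rightarrow> 'b::euclidean_space ^'n"
  assumes "\<And>i. continuously_differentiable (\<lambda>x. f x $ i)"
  shows "continuously_differentiable f"
proof -
  have "continuously_differentiable (\<lambda>x. (f x \<bullet> b) *\<^sub>R b)" if "b \<in> Basis" for b
  proof -
    obtain i u where b: "b = axis i u" "u \<in> Basis"
      using \<open>b \<in> Basis\<close> by (auto simp: Basis_vec_def)
    have "continuously_differentiable (\<lambda>x. (f x $ i \<bullet> u) *\<^sub>R b)"
      by (intro continuously_differentiable_scaleR continuously_differentiable_const
          continuously_differentiable_compose_bounded_linear[OF bounded_linear_inner_left assms])
    then show ?thesis
      by (simp add: b inner_axis inner_commute)
  qed
  then have "continuously_differentiable (\<lambda>x. \<Sum>b\<in>Basis. (f x \<bullet> b) *\<^sub>R b)"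
    by (auto intro!: continuously_differentiable_sum)
  then show ?thesis
    by (simp add: euclidean_representation)
qed

lemma continuously_differentiable_det:
  fixes F :: "'a::euclidean_space \<Rightarrow> real^'n^'n"
  assumes "\<And>i j. continuously_differentiable (\<lambda>x. F x $ i $ j)"
  shows "continuously_differentiable (\<lambda>x. det (F x))"
  unfolding det_def
  by (auto intro!: continuously_differentiable_sum continuously_differentiable_mult
      continuously_differentiable_const continuously_differentiable_prod assms
      simp: finite_permutations)

lemma continuously_differentiable_matrix_entry:
  "continuously_differentiable (\<lambda>M::real^'n^'m. M $ i $ j)"
  by (intro continuously_differentiable_component continuously_differentiable_bounded_linear
      bounded_linear_ident)

text \<open>The derivative is bounded on the compact ball, so the mean value inequality applies.\<close>

lemma continuously_differentiable_lipschitz_on_cball: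
  fixes g :: "'a::euclidean_space \<Rightarrow> 'b::real_normed_vector"
  assumes "continuously_differentiable g"
  obtains B where "B-lipschitz_on (cball y r) g"
proof -
  obtain G where G: "\<And>x. (g has_derivative blinfun_apply (G x)) (at x)" "continuous_on UNIV G"
    using assms unfolding continuously_differentiable_def by blast
  have "compact (G ` cball y r)"
    by (rule compact_continuous_image) (auto intro: continuous_on_subset[OF G(2)])
  then obtain B where B: "B > 0" "\<And>x. x \<in> cball y r \<Longrightarrow> norm (G x) \<le> B"
    using compact_imp_bounded bounded_pos by (metis imageI)
  have "norm (g x - g z) \<le> B * norm (x - z)" if "x \<in> cball y r" "z \<in> cball y r" for x z
    by (rule differentiable_bound[of "cball y r" g "\<lambda>x. blinfun_apply (G x)"])
      (use that B G(1) in \<open>auto intro: has_derivative_at_withinI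
         simp: norm_blinfun.rep_eq[symmetric]\<close>)
  then have "B-lipschitz_on (cball y r) g"
    using B by (intro lipschitz_onI) (auto simp: dist_norm)
  then show ?thesis ..
qed

lemma regular_at_RegLp_compose:
  fixes A :: "'a::real_normed_vector \<Rightarrow> 'b::euclidean_space" and g :: "'b \<Rightarrow> 'c::real_normed_vector"
  assumes A: "regular_at RegLp A x0" and g: "continuously_differentiable g"
  shows "regular_at RegLp (\<lambda>x. g (A x)) x0"
proof -
  obtain r L where rL: "r > 0" "L \<ge> 0"
    "\<And>x. norm (x - x0) \<le> r \<Longrightarrow> norm (A x - A x0) \<le> L * norm (x - x0)"
    using A by auto
  obtain B where B: "B-lipschitz_on (cball (A x0) 1) g"
    using continuously_differentiable_lipschitz_on_cball[OF g] .
  define r' where "r' = min r (1 / (L + 1))"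
  have "norm (g (A x) - g (A x0)) \<le> (B * L) * norm (x - x0)" if x: "norm (x - x0) \<le> r'" for x
  proof -
    have A_le: "norm (A x - A x0) \<le> L * norm (x - x0)"
      using rL(3)[of x] x by (simp add: r'_def)
    have "L * norm (x - x0) \<le> L * (1 / (L + 1))"
      using x rL(2) unfolding r'_def by (intro mult_left_mono) auto
    also have "\<dots> \<le> 1"
      using rL(2) by (simp add: field_simps)
    finally have "A x \<in> cball (A x0) 1"
      using A_le by (simp add: dist_norm norm_minus_commute)
    then have "norm (g (A x) - g (A x0)) \<le> B * norm (A x - A x0)"
      using lipschitz_onD[OF B] by (simp add: dist_norm)
    also have "\<dots> \<le> B * (L * norm (x - x0))"
      using A_le lipschitz_on_nonneg[OF B] by (intro mult_left_mono)
    finally show ?thesis by simp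
  qed
  moreover have "r' > 0" "B * L \<ge> 0"
    using rL lipschitz_on_nonneg[OF B] by (auto simp: r'_def)
  ultimately show ?thesis by auto
qed

lemma regular_at_RegL_compose:
  fixes A :: "'a::real_normed_vector \<Rightarrow> 'b::euclidean_space" and g :: "'b \<Rightarrow> 'c::real_normed_vector"
  assumes A: "regular_at RegL A x0" and g: "continuously_differentiable g"
  shows "regular_at RegL (\<lambda>x. g (A x)) x0"
proof -
  obtain U L where U: "open U" "x0 \<in> U" "L-lipschitz_on U A"
    using A by auto
  have "isCont A x0"
    using U by (metis at_within_open lipschitz_on_continuous_on continuous_on_eq_continuous_within)
  then obtain d where d: "d > 0" "\<And>x. dist x x0 < d \<Longrightarrow> dist (A x) (A x0) < 1"
    by (metis continuous_at_eps_delta zero_less_one)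
  obtain e where e: "e > 0" "ball x0 e \<subseteq> U"
    using U open_contains_ball by blast
  define V where "V = ball x0 (min d e)"
  have V: "open V" "x0 \<in> V" "V \<subseteq> U"
    using d e by (auto simp: V_def)
  have "A ` V \<subseteq> cball (A x0) 1"
    using d(2) by (auto simp: V_def dist_commute less_imp_le)
  moreover obtain B where "B-lipschitz_on (cball (A x0) 1) g"
    using continuously_differentiable_lipschitz_on_cball[OF g] .
  ultimately have "B-lipschitz_on (A ` V) g"
    using lipschitz_on_subset by blast
  then have "(B * L)-lipschitz_on V (\<lambda>x. g (A x))"
    by (rule lipschitz_on_compose2[OF lipschitz_on_subset[OF U(3) V(3)]])
  then show ?thesis
    using V by auto
qed

lemma regular_at_Reg1_compose:
  fixes A :: "'a::real_normed_vector \<Rightarrow> 'b::euclidean_space" and g :: "'b \<Rightarrow> 'c::real_normed_vector"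
  assumes A: "regular_at Reg1 A x0" and g: "continuously_differentiable g"
  shows "regular_at Reg1 (\<lambda>x. g (A x)) x0"
proof -
  obtain U A' where U: "open U" "x0 \<in> U"
    "\<And>x. x \<in> U \<Longrightarrow> (A has_derivative blinfun_apply (A' x)) (at x)" "isCont A' x0"
    using A by auto
  obtain G where G: "\<And>y. (g has_derivative blinfun_apply (G y)) (at y)" "\<And>y. isCont G y"
    using continuously_differentiableE[OF g] by blast
  have "((\<lambda>x. g (A x)) has_derivative blinfun_apply (G (A x) o\<^sub>L A' x)) (at x)" if "x \<in> U" for x
    using diff_chain_at[OF U(3)[OF that] G(1)[of "A x"]] by (simp add: blinfun_compose.rep_eq o_def)
  moreover have "isCont (\<lambda>x. G (A x) o\<^sub>L A' x) x0"
  proof -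
    have "isCont A x0"
      using U(2,3) has_derivative_continuous by blast
    then have "isCont (\<lambda>x. G (A x)) x0"
      using continuous_at_compose[OF _ G(2)] by (simp add: o_def)
    then show ?thesis
      by (rule bounded_bilinear.continuous[OF bounded_bilinear_blinfun_compose _ U(4)])
  qed
  ultimately show ?thesis
    using U(1,2) by (auto intro!: exI[of _ U] exI[of _ "\<lambda>x. G (A x) o\<^sub>L A' x"])
qed

lemma regular_at_compose_continuously_differentiable:
  fixes A :: "'a::real_normed_vector \<Rightarrow> 'b::euclidean_space" and g :: "'b \<Rightarrow> 'c::real_normed_vector"
  assumes A: "regular_at reg A x0" and g: "continuously_differentiable g"
  shows "regular_at reg (\<lambda>x. g (A x)) x0"
proof (cases reg)
  case Reg0
  then show ?thesis
    using A continuous_at_compose[OF _ continuously_differentiable_imp_isCont[OF g]]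
    by (simp add: o_def)
next
  case Reg1p
  have "g differentiable (at (A x0))"
    using g by (meson continuously_differentiableE differentiableI)
  then show ?thesis
    using A Reg1p differentiable_chain_at[of A x0 g] by (simp add: o_def)
qed (use A g regular_at_RegLp_compose regular_at_RegL_compose regular_at_Reg1_compose in simp_all)

definition cramer_inv :: "real^'m^'m \<Rightarrow> real^'m^'m" where
  "cramer_inv K = (\<chi> k j. det (\<chi> i l. if l = k then (if i = j then 1 else 0) else K $ i $ l) / det K)"

lemma matrix_mul_cramer_inv:
  fixes K :: "real^'m^'m"
  assumes "det K \<noteq> 0"
  shows "K ** cramer_inv K = mat 1"
proof -
  have "(K ** cramer_inv K) $ i $ j = mat 1 $ i $ j" for i j
  proof -
    define b :: "real^'m" where "b = (\<chi> i. if i = j then 1 else 0)"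
    define x :: "real^'m" where "x = (\<chi> k. cramer_inv K $ k $ j)"
    have "x = (\<chi> k. det (\<chi> i l. if l = k then b $ i else K $ i $ l) / det K)"
      unfolding x_def b_def cramer_inv_def by (simp add: vec_eq_iff cong: if_cong)
    then have "K *v x = b"
      using cramer[OF assms] by blast
    then show ?thesis
      by (simp add: vec_eq_iff matrix_vector_mult_def matrix_matrix_mult_def x_def b_def mat_def)
  qed
  then show ?thesis
    by (simp add: vec_eq_iff)
qed

lemma pinv_eq_inverse:
  fixes B :: "real^'m^'m"
  assumes BX: "B ** X = mat 1" and XB: "X ** B = mat 1"
  shows "pinv B = X"
  unfolding pinv_def
proof (rule the_equality)
  fix Y
  assume "B ** Y ** B = B \<and> Y ** B ** Y = Y \<and> transpose (B ** Y) = B ** Y \<and> transpose (Y ** B) = Y ** B"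
  then have "X ** (B ** Y ** B) ** X = X ** B ** X"
    by simp
  also have "\<dots> = X"
    using XB by (simp add: matrix_mul_assoc[symmetric])
  moreover have "X ** (B ** Y ** B) ** X = (X ** B) ** Y ** (B ** X)"
    by (simp add: matrix_mul_assoc)
  ultimately show "Y = X"
    using BX XB by simp
qed (use BX XB in simp)

lemma det_scaled_gram_plus_scalar_nonzero:
  fixes M :: "real^'n^'m"
  assumes "s \<ge> 0" "c > 0"
  shows "det (s *\<^sub>R (M ** transpose M) + c *\<^sub>R mat 1) \<noteq> 0"
proof -
  let ?K = "s *\<^sub>R (M ** transpose M) + c *\<^sub>R mat 1"
  have "x = 0" if "?K *v x = 0" for x
  proof -
    have scale: "(a *\<^sub>R N) *v y = a *\<^sub>R (N *v y)" for a and N :: "real^'m^'m" and y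
      by (simp add: vec_eq_iff matrix_vector_mult_def sum_distrib_left algebra_simps)
    have gram: "x \<bullet> ((M ** transpose M) *v x) = (x v* M) \<bullet> (x v* M)"
      by (metis dot_lmul_matrix matrix_vector_mul_assoc transpose_matrix_vector)
    have "0 = x \<bullet> (?K *v x)"
      using that by simp
    also have "\<dots> = s * ((x v* M) \<bullet> (x v* M)) + c * (x \<bullet> x)"
      by (simp add: matrix_vector_mult_add_rdistrib scale inner_add_right gram[symmetric])
    finally show "x = 0"
      using assms by (smt (verit) inner_ge_zero inner_eq_zero_iff mult_nonneg_nonneg mult_pos_pos)
  qed
  then have "\<exists>B. B ** ?K = mat 1"
    using matrix_left_invertible_ker by blast
  then show ?thesis
    using invertible_det_nz invertible_left_inverse by blast
qed

text \<open>Along the segment from \<open>I\<close> to \<open>M M\<^sup>T\<close> the determinant never vanishes before the end.\<close>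

lemma det_gram_nonneg:
  fixes M :: "real^'n^'m"
  shows "det (M ** transpose M) \<ge> 0"
proof (rule ccontr)
  assume neg: "\<not> ?thesis"
  define h where "h t = det (mat 1 + t *\<^sub>R (M ** transpose M - mat 1))" for t
  have "continuously_differentiable h"
    unfolding h_def
    by (intro continuously_differentiable_det)
      (simp add: continuously_differentiable_add continuously_differentiable_mult
        continuously_differentiable_const continuously_differentiable_bounded_linear
        bounded_linear_ident)
  then have "continuous_on {0..1} h"
    by (auto intro: continuous_at_imp_continuous_on continuously_differentiable_imp_isCont)
  moreover have "h 0 = 1" "h 1 < 0"
    using neg by (simp_all add: h_def)
  ultimately obtain t where t: "0 \<le> t" "t \<le> 1" "h t = 0"
    using IVT2'[of h 1 0 0] by force
  moreover have "t \<noteq> 1"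
    using t \<open>h 1 < 0\<close> by auto
  moreover have "mat 1 + t *\<^sub>R (M ** transpose M - mat 1) = t *\<^sub>R (M ** transpose M) + (1 - t) *\<^sub>R mat 1"
    by (simp add: algebra_simps)
  ultimately show False
    using det_scaled_gram_plus_scalar_nonzero[of t "1 - t" M] by (simp add: h_def)
qed

definition damped_pinv_rational :: "real \<Rightarrow> nat \<Rightarrow> real^'n^'m \<Rightarrow> real^'m^'n" where
  "damped_pinv_rational \<mu> \<nu> M = (det (M ** transpose M) ^ \<nu>) *\<^sub>R
     (transpose M ** cramer_inv ((det (M ** transpose M) ^ \<nu>) *\<^sub>R (M ** transpose M) + \<mu>\<^sup>2 *\<^sub>R mat 1))"

lemma damped_pinv_damping_eq_rational:
  fixes M :: "real^'n^'m"
  assumes "\<mu> > 0"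
  shows "damped_pinv M (damping \<mu> \<nu> M) = damped_pinv_rational \<mu> \<nu> M"
proof -
  define S where "S = M ** transpose M"
  define c where "c = det S ^ \<nu>"
  define K where "K = c *\<^sub>R S + \<mu>\<^sup>2 *\<^sub>R (mat 1 :: real^'m^'m)"
  have "c \<ge> 0"
    unfolding c_def S_def by (intro zero_le_power det_gram_nonneg)
  have rational: "damped_pinv_rational \<mu> \<nu> M = c *\<^sub>R (transpose M ** cramer_inv K)"
    by (simp add: damped_pinv_rational_def K_def c_def S_def)
  show ?thesis
  proof (cases "c > 0")
    case True
    have "det K \<noteq> 0"
      unfolding K_def S_def using det_scaled_gram_plus_scalar_nonzero[of c "\<mu>\<^sup>2" M] \<open>c \<ge> 0\<close> assms by simp
    then have "K ** cramer_inv K = mat 1"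
      by (rule matrix_mul_cramer_inv)
    moreover have "S + (\<mu>\<^sup>2 / c) *\<^sub>R mat 1 = (1 / c) *\<^sub>R K"
      using True by (simp add: K_def scaleR_add_right)
    ultimately have right: "(S + (\<mu>\<^sup>2 / c) *\<^sub>R mat 1) ** (c *\<^sub>R cramer_inv K) = mat 1"
      using True by (simp add: matrix_scalar_ac scalar_matrix_assoc[symmetric])
    then have left: "(c *\<^sub>R cramer_inv K) ** (S + (\<mu>\<^sup>2 / c) *\<^sub>R mat 1) = mat 1"
      using matrix_left_right_inverse by blast
    have "damping \<mu> \<nu> M = ereal (sqrt (\<mu>\<^sup>2 / c))"
      using True by (simp add: damping_def c_def S_def)
    then have "damped_pinv M (damping \<mu> \<nu> M) = transpose M ** (c *\<^sub>R cramer_inv K)"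
      using True pinv_eq_inverse[OF right left] by (simp add: damped_pinv_def S_def)
    then show ?thesis
      by (simp add: rational matrix_scalar_ac scalar_matrix_assoc)
  next
    case False
    then show ?thesis
      using \<open>c \<ge> 0\<close> rational by (simp add: damped_pinv_def damping_def c_def S_def)
  qed
qed

lemma continuously_differentiable_damped_pinv_rational:
  assumes "\<mu> > 0"
  shows "continuously_differentiable (damped_pinv_rational \<mu> \<nu> :: real^'n^'m \<Rightarrow> real^'m^'n)"
proof -
  define c :: "real^'n^'m \<Rightarrow> real" where "c M = det (M ** transpose M) ^ \<nu>" for M
  define K :: "real^'n^'m \<Rightarrow> real^'m^'m" where
    "K M = c M *\<^sub>R (M ** transpose M) + \<mu>\<^sup>2 *\<^sub>R mat 1" for M
  have gram: "continuously_differentiable (\<lambda>M::real^'n^'m. (M ** transpose M) $ i $ j)" for i j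
    by (simp add: matrix_matrix_mult_def transpose_def)
      (auto intro!: continuously_differentiable_sum continuously_differentiable_mult
        continuously_differentiable_matrix_entry)
  have c: "continuously_differentiable c"
    unfolding c_def by (intro continuously_differentiable_power continuously_differentiable_det gram)
  have K: "continuously_differentiable (\<lambda>M. K M $ i $ j)" for i j
    by (simp add: K_def)
      (intro continuously_differentiable_add continuously_differentiable_mult c gram
        continuously_differentiable_const)
  have det_K: "det (K M) \<noteq> 0" for M
  proof -
    have "c M \<ge> 0"
      unfolding c_def by (intro zero_le_power det_gram_nonneg)
    then show ?thesis
      unfolding K_def using det_scaled_gram_plus_scalar_nonzero[of "c M" "\<mu>\<^sup>2" M] assms by simp
  qed
  have "continuously_differentiable (\<lambda>M. cramer_inv (K M) $ k $ j)" for k j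
  proof -
    have "continuously_differentiable
        (\<lambda>M. (if b = k then (if a = j then 1 else 0) else K M $ a $ b))" for a b
      by (cases "b = k") (auto intro: continuously_differentiable_const K)
    then show ?thesis
      unfolding cramer_inv_def
      by simp (intro continuously_differentiable_divide continuously_differentiable_det det_K K, simp)
  qed
  then show ?thesis
    unfolding damped_pinv_rational_def c_def[symmetric] K_def[symmetric]
    by (intro continuously_differentiable_vec)
      (simp add: matrix_matrix_mult_def transpose_def,
        intro continuously_differentiable_mult c continuously_differentiable_sum
          continuously_differentiable_matrix_entry, simp)
qed

theorem lemma8:
  fixes A :: "real^'d \<Rightarrow> real^'n^'m" and x0 :: "real^'d"
    and \<mu> :: real and \<nu> :: nat and reg :: regclass
  assumes "regular_at reg A x0"
    and "\<mu> > 0"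
  shows "regular_at reg (\<lambda>x. damped_pinv (A x) (damping \<mu> \<nu> (A x))) x0"
proof -
  have "regular_at reg (\<lambda>x. damped_pinv_rational \<mu> \<nu> (A x)) x0"
    using regular_at_compose_continuously_differentiable[OF assms(1)
        continuously_differentiable_damped_pinv_rational[OF assms(2)]] .
  then show ?thesis
    by (simp add: damped_pinv_damping_eq_rational[OF assms(2)])
qed

end
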